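(* Let $(K,C,S)$ be the associated layered complex of a divided simplicial complex $(K,S^0)$. Suppose that $(K,C,S)$ does not admit an intermediate collapse. If $(K',C',S)$ is obtained from $(K,C,S)$ by a $C$-collapse, then $(K',C',S)$ still does not admit an intermediate collapse.
   Context: A simplicial complex $K$ is a set of finite nonempty sets (simplices) closed under passing to nonempty subsets (faces); $K^0$ is its vertex set; $t<s$ means $t$ is a proper face of $s$. A simplex is principal in $K$ if it is not a proper face of any simplex of $K$; $s$ is free in $K$ if it is a proper face of a principal simplex $p$ and of no other simplex of $K$. A layered simplicial complex is $(K,C,S)$ with $C,S$ disjoint subcomplexes; $\mathrm{IM}(K,C,S)$ denotes simplices in neither $C$ nor $S$. A divided simplicial complex is $(K,S^0)$, $S^0\subseteq K^0$; its associated layered complex has $S$ = simplices with all vertices in $S^0$, $C$ = simplices with all vertices in $K^0-S^0$. An elementary $C$-collapse replaces $(K,C,S)$ by $(K-\{s,p\},C-\{s,p\},S)$ where $p\in C$ is principal in $K$ and $s$ is a face of $p$ free in $K$; a $C$-collapse is a finite sequence of these. $(K,C,S)$ (associated to a divided complex) admits an intermediate collapse if there exist simplices $s,p$ with (i) $p\in\mathrm{IM}(K,C,S)$, (ii) $p$ principal in $K$, (iii) $s$ a face of $p$ free in $K$, (iv) every $t\in S$ with $t<p$ satisfies $t<s$. *)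

theory Defs
  imports Main
begin

definition simplicial_complex :: "'a set set \<Rightarrow> bool" where
  "simplicial_complex K \<longleftrightarrow>
     (\<forall>s\<in>K. finite s \<and> s \<noteq> {} \<and> (\<forall>t. t \<subseteq> s \<and> t \<noteq> {} \<longrightarrow> t \<in> K))"

definition subcomplex :: "'a set set \<Rightarrow> 'a set set \<Rightarrow> bool" where
  "subcomplex L K \<longleftrightarrow> L \<subseteq> K \<and> simplicial_complex L"

text \<open>Vertex set K^0: the vertices v with {v} in K, i.e. the union of all simplices.\<close>
definition vertices :: "'a set set \<Rightarrow> 'a set" where
  "vertices K = \<Union>K"

definition principal :: "'a set set \<Rightarrow> 'a set \<Rightarrow> bool" where
  "principal K p \<longleftrightarrow> p \<in> K \<and> \<not> (\<exists>q\<in>K. p \<subset> q)"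

definition free :: "'a set set \<Rightarrow> 'a set \<Rightarrow> bool" where
  "free K s \<longleftrightarrow> (\<exists>p. principal K p \<and> s \<subset> p \<and> (\<forall>q\<in>K. s \<subset> q \<longrightarrow> q = p))"

definition layered_complex :: "'a set set \<Rightarrow> 'a set set \<Rightarrow> 'a set set \<Rightarrow> bool" where
  "layered_complex K C S \<longleftrightarrow> simplicial_complex K \<and> subcomplex C K \<and> subcomplex S K \<and> C \<inter> S = {}"

definition divided_complex :: "'a set set \<Rightarrow> 'a set \<Rightarrow> bool" where
  "divided_complex K S0 \<longleftrightarrow> simplicial_complex K \<and> S0 \<subseteq> vertices K"

definition assoc_S :: "'a set set \<Rightarrow> 'a set \<Rightarrow> 'a set set" where
  "assoc_S K S0 = {s\<in>K. s \<subseteq> S0}"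

definition assoc_C :: "'a set set \<Rightarrow> 'a set \<Rightarrow> 'a set set" where
  "assoc_C K S0 = {s\<in>K. s \<subseteq> vertices K - S0}"

definition IM :: "'a set set \<Rightarrow> 'a set set \<Rightarrow> 'a set set \<Rightarrow> 'a set set" where
  "IM K C S = {s\<in>K. s \<notin> C \<and> s \<notin> S}"

inductive elem_C_collapse ::
  "'a set set \<times> 'a set set \<times> 'a set set \<Rightarrow> 'a set set \<times> 'a set set \<times> 'a set set \<Rightarrow> bool" where
  "\<lbrakk> p \<in> C; principal K p; s \<subseteq> p; free K s \<rbrakk>
   \<Longrightarrow> elem_C_collapse (K, C, S) (K - {s, p}, C - {s, p}, S)"

definition C_collapse ::
  "'a set set \<times> 'a set set \<times> 'a set set \<Rightarrow> 'a set set \<times> 'a set set \<times> 'a set set \<Rightarrow> bool" where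
  "C_collapse = elem_C_collapse\<^sup>*\<^sup>*"

definition admits_intermediate_collapse :: "'a set set \<Rightarrow> 'a set set \<Rightarrow> 'a set set \<Rightarrow> bool" where
  "admits_intermediate_collapse K C S \<longleftrightarrow>
     (\<exists>s p. p \<in> IM K C S \<and> principal K p \<and> s \<subseteq> p \<and> free K s \<and>
            (\<forall>t\<in>S. t \<subset> p \<longrightarrow> t \<subset> s))"

end

theory Submission
  imports Defs
begin

text \<open>
  An elementary C-collapse only removes simplices of C, which avoid S0. Every simplex of
  IM contains a vertex c of S0, and {c} is then a proper face lying in S, so condition (iv)
  forces the free face of an intermediate collapse to contain c as well. Hence neither
  simplex of an intermediate collapse lies below a removed simplex, so it remains principal,
  resp. free, once the removed simplices are put back: an intermediate collapse after the
  C-collapse would already have been one before.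
\<close>

lemma principal_Diff_imp_principal:
  assumes "principal (K - R) q" and "\<forall>r\<in>R. \<not> q \<subset> r"
  shows "principal K q"
  using assms unfolding principal_def by blast

lemma free_Diff_imp_free:
  assumes "free (K - R) s" and "\<forall>r\<in>R. \<not> s \<subset> r"
  shows "free K s"
proof -
  obtain p where p: "principal (K - R) p" "s \<subset> p" "\<forall>q\<in>K - R. s \<subset> q \<longrightarrow> q = p"
    using assms(1) unfolding free_def by blast
  have "\<forall>r\<in>R. \<not> p \<subset> r"
    using assms(2) p(2) by (meson subset_psubset_trans psubset_imp_subset)
  then have "principal K p"
    by (rule principal_Diff_imp_principal[OF p(1)])
  then show ?thesis
    unfolding free_def using p(2,3) assms(2) by blast
qed

lemma assoc_S_proper_face_contains_vertex:
  assumes "simplicial_complex K" and "p \<in> K" and "p \<notin> assoc_S K S0"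
    and "c \<in> p" and "c \<in> S0"
    and "\<forall>t\<in>assoc_S K S0. t \<subset> p \<longrightarrow> t \<subset> s"
  shows "c \<in> s"
proof -
  have "\<forall>t. t \<subseteq> p \<and> t \<noteq> {} \<longrightarrow> t \<in> K"
    using assms(1,2) unfolding simplicial_complex_def by blast
  then have "{c} \<in> K"
    using assms(4) by simp
  then have "{c} \<in> assoc_S K S0"
    using assms(5) unfolding assoc_S_def by simp
  moreover have "{c} \<subset> p"
    using calculation assms(3,4) by auto
  ultimately show ?thesis
    using assms(6) by blast
qed

lemma intermediate_collapse_Diff_reflects:
  assumes K0: "simplicial_complex K0" and "K \<subseteq> K0"
    and C: "C = {t\<in>K. t \<subseteq> vertices K0 - S0}" and S: "S = assoc_S K0 S0"
    and disj: "\<forall>r\<in>R. r \<inter> S0 = {}"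
    and "admits_intermediate_collapse (K - R) (C - R) S"
  shows "admits_intermediate_collapse K C S"
proof -
  obtain s p where p: "p \<in> IM (K - R) (C - R) S" "principal (K - R) p"
    and s: "s \<subseteq> p" "free (K - R) s" and below_s: "\<forall>t\<in>S. t \<subset> p \<longrightarrow> t \<subset> s"
    using assms(6) unfolding admits_intermediate_collapse_def by blast
  have p_IM: "p \<in> IM K C S"
    using p(1) unfolding IM_def by auto
  then have "p \<in> K0" "p \<notin> C" "p \<notin> S"
    using assms(2) unfolding IM_def by auto
  moreover have "p \<subseteq> vertices K0"
    using \<open>p \<in> K0\<close> unfolding vertices_def by blast
  ultimately obtain c where c: "c \<in> p" "c \<in> S0"
    using C p_IM unfolding IM_def by blast
  have "c \<in> s"
    using assoc_S_proper_face_contains_vertex[OF K0 \<open>p \<in> K0\<close>] \<open>p \<notin> S\<close> c below_s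
    unfolding S by blast
  then have "\<forall>r\<in>R. \<not> s \<subset> r" "\<forall>r\<in>R. \<not> p \<subset> r"
    using disj c s(1) by blast+
  then have "principal K p" "free K s"
    using principal_Diff_imp_principal[OF p(2)] free_Diff_imp_free[OF s(2)] by blast+
  then show ?thesis
    unfolding admits_intermediate_collapse_def using p_IM s(1) below_s by blast
qed

lemmas rtranclp_induct3 =
  rtranclp_induct[of _ "(ax, ay, az)" "(bx, by, bz)", split_rule, consumes 1, case_names base step]

lemma C_collapse_assoc_shape:
  assumes "C_collapse (K, assoc_C K S0, S) (K', C', S')"
  shows "K' \<subseteq> K \<and> C' = {t\<in>K'. t \<subseteq> vertices K - S0} \<and> S' = S"
  using assms unfolding C_collapse_def
proof (induction rule: rtranclp_induct3)
  case base
  then show ?case unfolding assoc_C_def by simp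
next
  case (step K1 C1 S1 K2 C2 S2)
  from step.hyps(2) step.IH show ?case
    by (cases rule: elem_C_collapse.cases) auto
qed

lemma elem_C_collapse_reflects_intermediate_collapse:
  assumes "divided_complex K S0"
    and "C_collapse (K, assoc_C K S0, assoc_S K S0) (K1, C1, S1)"
    and "elem_C_collapse (K1, C1, S1) (K2, C2, S2)"
    and "admits_intermediate_collapse K2 C2 S2"
  shows "admits_intermediate_collapse K1 C1 S1"
  using assms(3)
proof cases
  case (1 p s)
  have shape: "K1 \<subseteq> K" "C1 = {t\<in>K1. t \<subseteq> vertices K - S0}" "S1 = assoc_S K S0"
    using C_collapse_assoc_shape[OF assms(2)] by auto
  have "\<forall>r\<in>{s, p}. r \<inter> S0 = {}"
    using 1 shape(2) by auto
  then show ?thesis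
    using intermediate_collapse_Diff_reflects[OF _ shape] assms(1,4) 1
    unfolding divided_complex_def by blast
qed

theorem proposition4p17:
  fixes K K' C C' S :: "'a set set" and S0 :: "'a set"
  assumes "divided_complex K S0"
    and "C = assoc_C K S0" and "S = assoc_S K S0"
    and "\<not> admits_intermediate_collapse K C S"
    and "C_collapse (K, C, S) (K', C', S)"
  shows "\<not> admits_intermediate_collapse K' C' S"
proof -
  have "elem_C_collapse\<^sup>*\<^sup>* (K, C, S) (K', C', S)"
    using assms(5) unfolding C_collapse_def .
  then show ?thesis
  proof (induction rule: rtranclp_induct3)
    case base
    then show ?case using assms(4) .
  next
    case (step K1 C1 S1 K2 C2 S2)
    then show ?case
      using elem_C_collapse_reflects_intermediate_collapse[OF assms(1)] assms(2,3)
      unfolding C_collapse_def by blast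
  qed
qed

end
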